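(* Let $Z$ be a uniform read-$d$-times NBP and let $X\subseteq V(Z)$ separate two disjoint subsets $Y_1,Y_2$ of $Vars(Z)$. Let $Y'_1\subseteq Y_1$, $Y'_2\subseteq Y_2$, let $S$ be an assignment (set of literals) to $Vars(Z)\setminus(Y_1\cup Y_2)$, and let $Q',Q''$ be computational paths of $Z$ passing through all vertices of $X$ with $S\subseteq A(Q')\cap A(Q'')$, such that $Q'$ assigns all variables of $Y'_1$ negatively and $Q''$ assigns all variables of $Y'_2$ negatively. Then there is a computational path $Q^*$ of $Z$ passing through all vertices of $X$ with $S\subseteq A(Q^* )$ that assigns all variables of $Y'_1\cup Y'_2$ negatively.
   Context: An NBP $Z$ is a directed acyclic multigraph with one source and one sink, some edges labelled with literals; $Vars(Z)$ is the set of variables labelling edges. A source-sink path $P$ is computational if no variable occurs on it with both signs; $A(P)$ is the set of literals labelling its edges; $P$ assigns a variable $y$ negatively if $\neg y\in A(P)$. Read-$d$-times: each variable labels at most $d$ edges of each source-sink path; uniform: exactly $d$. A partition of a path $P$ is a sequence $P_1,\dots,P_c$ of subpaths with $P_1$ a prefix, $P_c$ a suffix, and the first vertex of $P_i$ equal to the last vertex of $P_{i-1}$; the set $X$ of the ends of $P_1,\dots,P_{c-1}$ generates this partition. A set $X\subseteq V(Z)$ not containing the source or sink separates disjoint sets $Y_1,Y_2$ of variables if there is a computational path $P$ through all vertices of $X$ such that, in the partition $P_1,\dots,P_{|X|+1}$ generated by $X$ on $P$, either variables of $Y_1$ label edges only of $P_i$ with $i$ odd and variables of $Y_2$ only of $P_i$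 with $i$ even, or vice versa. *)

theory Defs
  imports Main
begin

datatype 'x lit = Pos 'x | Neg 'x

fun var :: "'x lit \<Rightarrow> 'x" where
  "var (Pos x) = x" | "var (Neg x) = x"

record ('v, 'e, 'x) nbp =
  verts :: "'v set"
  edges :: "'e set"
  tail :: "'e \<Rightarrow> 'v"
  head :: "'e \<Rightarrow> 'v"
  lab :: "'e \<Rightarrow> 'x lit option"
  src :: 'v
  snk :: 'v

fun walk :: "('v, 'e, 'x) nbp \<Rightarrow> 'v \<Rightarrow> 'e list \<Rightarrow> 'v \<Rightarrow> bool" where
  "walk Z u [] v = (u = v \<and> u \<in> verts Z)"
| "walk Z u (e # es) v = (e \<in> edges Z \<and> tail Z e = u \<and> walk Z (head Z e) es v)"

definition is_nbp :: "('v, 'e, 'x) nbp \<Rightarrow> bool" where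
  "is_nbp Z \<longleftrightarrow> finite (verts Z) \<and> finite (edges Z)
     \<and> (\<forall>e\<in>edges Z. tail Z e \<in> verts Z \<and> head Z e \<in> verts Z)
     \<and> (\<forall>u es. es \<noteq> [] \<longrightarrow> \<not> walk Z u es u)
     \<and> src Z \<in> verts Z \<and> snk Z \<in> verts Z
     \<and> (\<forall>v\<in>verts Z. (\<not> (\<exists>e\<in>edges Z. head Z e = v)) \<longleftrightarrow> v = src Z)
     \<and> (\<forall>v\<in>verts Z. (\<not> (\<exists>e\<in>edges Z. tail Z e = v)) \<longleftrightarrow> v = snk Z)"

definition Vars :: "('v, 'e, 'x) nbp \<Rightarrow> 'x set" where
  "Vars Z = {x. \<exists>e\<in>edges Z. \<exists>l. lab Z e = Some l \<and> var l = x}"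

definition ss_path :: "('v, 'e, 'x) nbp \<Rightarrow> 'e list \<Rightarrow> bool" where
  "ss_path Z P \<longleftrightarrow> walk Z (src Z) P (snk Z)"

definition pverts :: "('v, 'e, 'x) nbp \<Rightarrow> 'e list \<Rightarrow> 'v list" where
  "pverts Z P = src Z # map (head Z) P"

definition A :: "('v, 'e, 'x) nbp \<Rightarrow> 'e list \<Rightarrow> 'x lit set" where
  "A Z P = {l. \<exists>e\<in>set P. lab Z e = Some l}"

definition computational :: "('v, 'e, 'x) nbp \<Rightarrow> 'e list \<Rightarrow> bool" where
  "computational Z P \<longleftrightarrow> \<not> (\<exists>x. Pos x \<in> A Z P \<and> Neg x \<in> A Z P)"

definition labels_var :: "('v, 'e, 'x) nbp \<Rightarrow> 'x \<Rightarrow> 'e \<Rightarrow> bool" where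
  "labels_var Z x e \<longleftrightarrow> (\<exists>l. lab Z e = Some l \<and> var l = x)"

definition uniform_read :: "('v, 'e, 'x) nbp \<Rightarrow> nat \<Rightarrow> bool" where
  "uniform_read Z d \<longleftrightarrow> (\<forall>P. ss_path Z P \<longrightarrow>
     (\<forall>x\<in>Vars Z. length (filter (labels_var Z x) P) = d))"

definition partition_gen :: "('v, 'e, 'x) nbp \<Rightarrow> 'e list \<Rightarrow> 'v set \<Rightarrow> 'e list list \<Rightarrow> bool" where
  "partition_gen Z P X Ps \<longleftrightarrow> concat Ps = P \<and> (\<forall>p\<in>set Ps. p \<noteq> [])
     \<and> length Ps = card X + 1
     \<and> set (map (\<lambda>p. head Z (last p)) (butlast Ps)) = X"

definition alternating :: "('v, 'e, 'x) nbp \<Rightarrow> 'e list list \<Rightarrow> 'x set \<Rightarrow> 'x set \<Rightarrow> bool" where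
  "alternating Z Ps Y1 Y2 \<longleftrightarrow> (\<forall>i<length Ps. \<forall>e\<in>set (Ps ! i).
     (\<forall>x\<in>Y1. labels_var Z x e \<longrightarrow> even i) \<and> (\<forall>x\<in>Y2. labels_var Z x e \<longrightarrow> odd i))"
  \<comment> \<open>index i is 0-based, so even i means P_(i+1) has odd index\<close>

definition separates :: "('v, 'e, 'x) nbp \<Rightarrow> 'v set \<Rightarrow> 'x set \<Rightarrow> 'x set \<Rightarrow> bool" where
  "separates Z X Y1 Y2 \<longleftrightarrow> X \<subseteq> verts Z \<and> src Z \<notin> X \<and> snk Z \<notin> X \<and>
     (\<exists>P Ps. ss_path Z P \<and> computational Z P \<and> X \<subseteq> set (pverts Z P)
        \<and> partition_gen Z P X Ps
        \<and> (alternating Z Ps Y1 Y2 \<or> alternating Z Ps Y2 Y1))"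

definition assignment :: "'x lit set \<Rightarrow> 'x set \<Rightarrow> bool" where
  "assignment S W \<longleftrightarrow> (\<forall>l\<in>S. var l \<in> W) \<and>
     (\<forall>x\<in>W. (Pos x \<in> S \<or> Neg x \<in> S) \<and> \<not> (Pos x \<in> S \<and> Neg x \<in> S))"

end

theory Submission
  imports Defs
begin

text \<open>
  The vertices of \<open>X\<close> lie on the separating path, and as \<open>Z\<close> is acyclic they are strictly ordered
  by reachability; so every source-sink path through \<open>X\<close> visits them in the same order and splits
  at them into segments indexed like the partition of the separating path. Segments with the same
  index are interchangeable, and since every source-sink path reads each variable exactly \<open>d\<close>
  times, exchanging one segment preserves the number of occurrences of a variable in it. Hence
  a segment of \<open>Q'\<close> or \<open>Q''\<close> can only carry \<open>Y\<^sub>1\<close>-variables (resp. \<open>Y\<^sub>2\<close>-variables) at the indices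
  where the separating path does. Splicing the segments of \<open>Q'\<close> at the indices free of \<open>Y\<^sub>2\<close>
  with those of \<open>Q''\<close> at the others gives a path whose \<open>Y\<^sub>1\<close>-literals come from \<open>Q'\<close>, whose
  \<open>Y\<^sub>2\<close>-literals come from \<open>Q''\<close>, whose remaining literals agree with \<open>S\<close>, and which still
  reads every variable read by \<open>Q'\<close> or \<open>Q''\<close>.
\<close>

lemma walk_edges: "walk Z u es v \<Longrightarrow> set es \<subseteq> edges Z"
  by (induction es arbitrary: u) auto

lemma walk_last_vertex: "walk Z u es v \<Longrightarrow> v \<in> set (u # map (head Z) es)"
  by (induction es arbitrary: u) auto

lemma walk_append_walk: "walk Z u xs w \<Longrightarrow> walk Z w ys v \<Longrightarrow> walk Z u (xs @ ys) v"
  by (induction xs arbitrary: u) auto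

lemma walk_end_eq_head_last: "walk Z u es v \<Longrightarrow> es \<noteq> [] \<Longrightarrow> v = head Z (last es)"
  by (induction es arbitrary: u) (auto split: if_split_asm)

definition reach :: "('v, 'e, 'x) nbp \<Rightarrow> 'v \<Rightarrow> 'v \<Rightarrow> bool" where
  "reach Z u v \<longleftrightarrow> (\<exists>es. es \<noteq> [] \<and> walk Z u es v)"

lemma transp_reach: "transp (reach Z)"
proof (rule transpI)
  fix a b c
  assume "reach Z a b" "reach Z b c"
  then obtain es fs where "es \<noteq> []" "walk Z a es b" "walk Z b fs c"
    unfolding reach_def by blast
  then show "reach Z a c"
    unfolding reach_def by (metis append_is_Nil_conv walk_append_walk)
qed

definition segment_walks :: "('v, 'e, 'x) nbp \<Rightarrow> 'v list \<Rightarrow> 'e list list \<Rightarrow> bool" where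
  "segment_walks Z ws Qs \<longleftrightarrow> length ws = Suc (length Qs)
     \<and> (\<forall>j<length Qs. walk Z (ws ! j) (Qs ! j) (ws ! Suc j))"

lemma segment_walks_Nil: "segment_walks Z ws [] \<longleftrightarrow> (\<exists>u. ws = [u])"
  by (auto simp: segment_walks_def length_Suc_conv)

lemma segment_walks_Cons:
  "segment_walks Z (u # ws) (p # Qs) \<longleftrightarrow> ws \<noteq> [] \<and> walk Z u p (hd ws) \<and> segment_walks Z ws Qs"
  by (cases ws) (auto simp: segment_walks_def less_Suc_eq_0_disj)

lemma segment_walks_update:
  assumes "segment_walks Z ws Qs" "segment_walks Z ws Rs"
  shows "segment_walks Z ws (Qs[j := Rs ! j])"
  unfolding segment_walks_def
proof (intro conjI allI impI)
  show "length ws = Suc (length (Qs[j := Rs ! j]))"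
    using assms(1) by (simp add: segment_walks_def)
  fix i
  assume "i < length (Qs[j := Rs ! j])"
  with assms show "walk Z (ws ! i) (Qs[j := Rs ! j] ! i) (ws ! Suc i)"
    by (cases "i = j") (auto simp: segment_walks_def)
qed

lemma segment_walks_choose:
  "segment_walks Z ws Qs \<Longrightarrow> segment_walks Z ws Rs \<Longrightarrow>
   segment_walks Z ws (map (\<lambda>j. if sel j then Qs ! j else Rs ! j) [0..<length Qs])"
  by (auto simp: segment_walks_def)

lemma segment_walks_sorted_reach:
  assumes "segment_walks Z ws Qs" "[] \<notin> set Qs"
  shows "sorted_wrt (reach Z) ws"
  unfolding sorted_wrt_iff_nth_Suc_transp[OF transp_reach] reach_def
  using assms by (auto simp: segment_walks_def) (metis nth_mem)

lemma segment_walks_vertices: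
  "segment_walks Z ws Qs \<Longrightarrow> set ws \<subseteq> set (hd ws # map (head Z) (concat Qs))"
proof (induction Qs arbitrary: ws)
  case Nil
  then show ?case by (auto simp: segment_walks_Nil)
next
  case (Cons p Qs)
  obtain u ws' where ws: "ws = u # ws'"
    using Cons.prems by (cases ws) (auto simp: segment_walks_def)
  with Cons.prems have "walk Z u p (hd ws')" "segment_walks Z ws' Qs"
    by (simp_all add: segment_walks_Cons)
  then have "hd ws' \<in> set (u # map (head Z) p)"
    by (simp only: walk_last_vertex)
  moreover have "set ws' \<subseteq> set (hd ws' # map (head Z) (concat Qs))"
    using Cons.IH \<open>segment_walks Z ws' Qs\<close> .
  ultimately show ?case
    using ws by auto
qed

lemma var_image_A: "var ` A Z P = {x. \<exists>e\<in>set P. labels_var Z x e}"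
  by (force simp: A_def labels_var_def)

lemma uniform_read_var_image_A:
  assumes "uniform_read Z d" "ss_path Z P" "ss_path Z R"
  shows "var ` A Z P = var ` A Z R"
proof -
  have "var ` A Z P \<subseteq> var ` A Z R" if "ss_path Z P" "ss_path Z R" for P R
  proof
    fix x
    assume "x \<in> var ` A Z P"
    then obtain e where e: "e \<in> set P" "labels_var Z x e"
      by (auto simp: var_image_A)
    with \<open>ss_path Z P\<close> have "x \<in> Vars Z"
      by (force simp: ss_path_def Vars_def labels_var_def dest: walk_edges)
    with assms(1) that have "length (filter (labels_var Z x) R) = length (filter (labels_var Z x) P)"
      by (simp add: uniform_read_def)
    also from e have "\<dots> > 0"
      by (auto simp: length_pos_if_in_set filter_empty_conv)
    finally show "x \<in> var ` A Z R"
      by (auto simp: var_image_A filter_empty_conv)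
  qed
  with assms show ?thesis
    by blast
qed

lemma computational_lit_unique:
  "computational Z P \<Longrightarrow> l \<in> A Z P \<Longrightarrow> l' \<in> A Z P \<Longrightarrow> var l = var l' \<Longrightarrow> l = l'"
  by (cases l; cases l') (auto simp: computational_def)

lemma A_of_splice:
  assumes "computational Z Q'" "computational Z Q''" "Y1 \<inter> Y2 = {}"
    and "assignment S (Vars Z - (Y1 \<union> Y2))" "S \<subseteq> A Z Q' \<inter> A Z Q''"
    and "set Q \<subseteq> edges Z" "set Q \<subseteq> set Q' \<union> set Q''"
    and "\<forall>e\<in>set Q. \<forall>x\<in>Y1. labels_var Z x e \<longrightarrow> e \<in> set Q'"
    and "\<forall>e\<in>set Q. \<forall>x\<in>Y2. labels_var Z x e \<longrightarrow> e \<in> set Q''"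
    and "var ` A Z Q' \<union> var ` A Z Q'' \<subseteq> var ` A Z Q"
  shows "A Z Q = {l \<in> A Z Q'. var l \<in> Y1} \<union> {l \<in> A Z Q''. var l \<in> Y2} \<union> S"
    and "computational Z Q"
proof -
  define T where "T = {l \<in> A Z Q'. var l \<in> Y1} \<union> {l \<in> A Z Q''. var l \<in> Y2} \<union> S"
  have S_vars: "var l \<in> Vars Z - (Y1 \<union> Y2)" if "l \<in> S" for l
    using assms(4) that by (simp add: assignment_def)
  have from_Q': "l \<in> A Z Q'" if "l \<in> A Z Q" "var l \<in> Y1" for l
    using assms(8) that by (force simp: A_def labels_var_def)
  have from_Q'': "l \<in> A Z Q''" if "l \<in> A Z Q" "var l \<in> Y2" for l
    using assms(9) that by (force simp: A_def labels_var_def)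
  have from_either: "l \<in> A Z Q' \<or> l \<in> A Z Q''" if "l \<in> A Z Q" for l
    using assms(7) that by (auto simp: A_def)
  have agree: "l' = l" if l: "l \<in> A Z Q" and l': "l' \<in> T" "var l' = var l" for l l'
  proof -
    consider "var l \<in> Y1" | "var l \<in> Y2" | "var l \<notin> Y1 \<union> Y2"
      by blast
    then show ?thesis
    proof cases
      case 1
      with l' assms(3) have "l' \<in> A Z Q'"
        by (auto simp: T_def dest: S_vars)
      with 1 l l'(2) show ?thesis
        using from_Q' computational_lit_unique[OF assms(1)] by metis
    next
      case 2
      with l' assms(3) have "l' \<in> A Z Q''"
        by (auto simp: T_def dest: S_vars)
      with 2 l l'(2) show ?thesis
        using from_Q'' computational_lit_unique[OF assms(2)] by metis
    next
      case 3
      with l' have "l' \<in> S"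
        by (auto simp: T_def)
      with assms(5) l l'(2) show ?thesis
        using from_either computational_lit_unique[OF assms(1)] computational_lit_unique[OF assms(2)]
        by blast
    qed
  qed
  have "A Z Q \<subseteq> T"
  proof
    fix l
    assume l: "l \<in> A Z Q"
    consider "var l \<in> Y1" | "var l \<in> Y2" | "var l \<in> Vars Z - (Y1 \<union> Y2)"
      using assms(6) l by (force simp: A_def Vars_def)
    then show "l \<in> T"
    proof cases
      case 3
      with assms(4) obtain s where "s \<in> S" "var s = var l"
        unfolding assignment_def by (metis var.simps)
      with l show ?thesis
        using agree by (force simp: T_def)
    qed (use l from_Q' from_Q'' in \<open>auto simp: T_def\<close>)
  qed
  moreover have "T \<subseteq> A Z Q"
  proof
    fix l'
    assume "l' \<in> T"
    then have "var l' \<in> var ` A Z Q' \<union> var ` A Z Q''"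
      using assms(5) by (auto simp: T_def)
    with assms(10) obtain l where "l \<in> A Z Q" "var l = var l'"
      by auto
    with \<open>l' \<in> T\<close> show "l' \<in> A Z Q"
      using agree by metis
  qed
  ultimately show "A Z Q = T"
    by blast
  show "computational Z Q"
    unfolding computational_def using \<open>A Z Q \<subseteq> T\<close> agree by fastforce
qed

lemma alternating_selector:
  assumes "alternating Z Ps Y1 Y2 \<or> alternating Z Ps Y2 Y1"
  obtains sel where "\<And>i e x. i < length Ps \<Longrightarrow> e \<in> set (Ps ! i) \<Longrightarrow> labels_var Z x e \<Longrightarrow>
    (x \<in> Y1 \<longrightarrow> sel i) \<and> (x \<in> Y2 \<longrightarrow> \<not> sel i)"
proof (cases "alternating Z Ps Y1 Y2")
  case True
  then show ?thesis
    by (intro that[of even]) (auto simp: alternating_def)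
next
  case False
  with assms show ?thesis
    by (intro that[of odd]) (auto simp: alternating_def)
qed

context
  fixes Z :: "('v, 'e, 'x) nbp"
  assumes nbp: "is_nbp Z"
begin

lemma edge_ends_in_verts: "e \<in> edges Z \<Longrightarrow> tail Z e \<in> verts Z \<and> head Z e \<in> verts Z"
  using nbp unfolding is_nbp_def by (elim conjE) (rule bspec)

lemma src_in_verts: "src Z \<in> verts Z"
  using nbp unfolding is_nbp_def by (elim conjE)

lemma walk_acyclic: "es \<noteq> [] \<Longrightarrow> \<not> walk Z u es u"
  using nbp unfolding is_nbp_def by (elim conjE) blast

lemma walk_ends_in_verts: "walk Z u es v \<Longrightarrow> u \<in> verts Z \<and> v \<in> verts Z"
  by (induction es arbitrary: u) (auto dest: edge_ends_in_verts)

lemma walk_append_iff: "walk Z u (xs @ ys) v \<longleftrightarrow> (\<exists>w. walk Z u xs w \<and> walk Z w ys v)"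
  by (induction xs arbitrary: u) (auto dest: walk_ends_in_verts)

lemma walk_split_at_vertex:
  assumes "walk Z u es v" "w \<in> set (u # map (head Z) es)"
  shows "\<exists>es1 es2. es = es1 @ es2 \<and> walk Z u es1 w \<and> walk Z w es2 v"
  using assms
proof (induction es arbitrary: u)
  case (Cons e es)
  show ?case
  proof (cases "w = u")
    case True
    with Cons.prems show ?thesis
      using walk_ends_in_verts[OF Cons.prems(1)] by (intro exI[of _ "[]"] exI[of _ "e # es"]) auto
  next
    case False
    with Cons.prems have "walk Z (head Z e) es v" "w \<in> set (head Z e # map (head Z) es)"
      by auto
    then obtain es1 es2 where "es = es1 @ es2" "walk Z (head Z e) es1 w" "walk Z w es2 v"
      using Cons.IH by blast
    with Cons.prems show ?thesis
      by (intro exI[of _ "e # es1"] exI[of _ es2]) auto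
  qed
qed simp

lemma walk_concat_segments:
  "segment_walks Z ws Qs \<Longrightarrow> hd ws \<in> verts Z \<Longrightarrow> walk Z (hd ws) (concat Qs) (last ws)"
proof (induction Qs arbitrary: ws)
  case Nil
  then show ?case by (auto simp: segment_walks_Nil)
next
  case (Cons p Qs)
  obtain u ws' where ws: "ws = u # ws'"
    using Cons.prems by (cases ws) (auto simp: segment_walks_def)
  with Cons.prems have "ws' \<noteq> []" "walk Z u p (hd ws')" "segment_walks Z ws' Qs"
    by (simp_all add: segment_walks_Cons)
  moreover from this have "walk Z (hd ws') (concat Qs) (last ws')"
    using Cons.IH walk_ends_in_verts by blast
  ultimately show ?case
    using ws by (simp add: walk_append_walk)
qed

lemma segment_walks_of_partition:
  "walk Z u (concat Ps) v \<Longrightarrow> [] \<notin> set Ps \<Longrightarrow> Ps \<noteq> [] \<Longrightarrow>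
   segment_walks Z (u # map (\<lambda>p. head Z (last p)) (butlast Ps) @ [v]) Ps"
proof (induction Ps arbitrary: u)
  case (Cons p Ps)
  show ?case
  proof (cases "Ps = []")
    case True
    with Cons.prems show ?thesis
      by (simp add: segment_walks_Cons segment_walks_Nil)
  next
    case False
    with Cons.prems obtain w where "walk Z u p w" "walk Z w (concat Ps) v"
      by (auto simp: walk_append_iff)
    moreover from Cons.prems have "p \<noteq> []"
      by auto
    ultimately have "w = head Z (last p)"
      by (simp add: walk_end_eq_head_last)
    moreover from \<open>walk Z w (concat Ps) v\<close> have
      "segment_walks Z (w # map (\<lambda>p. head Z (last p)) (butlast Ps) @ [v]) Ps"
      using Cons.IH Cons.prems False by simp
    ultimately show ?thesis
      using \<open>walk Z u p w\<close> False by (simp add: segment_walks_Cons)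
  qed
qed simp

lemma segment_walks_of_walk_through:
  assumes "walk Z u es v" "set xs \<subseteq> set (u # map (head Z) es)"
    and "sorted_wrt (reach Z) (u # xs @ [v])"
  shows "\<exists>Qs. concat Qs = es \<and> segment_walks Z (u # xs @ [v]) Qs"
  using assms
proof (induction xs arbitrary: u es)
  case Nil
  then show ?case
    by (intro exI[of _ "[es]"]) (simp add: segment_walks_Cons segment_walks_Nil)
next
  case (Cons x xs)
  from Cons.prems(2) have "x \<in> set (u # map (head Z) es)"
    by simp
  with Cons.prems(1) obtain es1 es2 where es: "es = es1 @ es2" "walk Z u es1 x" "walk Z x es2 v"
    using walk_split_at_vertex by blast
  have "set xs \<subseteq> set (x # map (head Z) es2)"
  proof
    fix y
    assume "y \<in> set xs"
    show "y \<in> set (x # map (head Z) es2)"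
    proof (rule ccontr)
      assume "y \<notin> set (x # map (head Z) es2)"
      moreover from Cons.prems(2) \<open>y \<in> set xs\<close> have "y \<in> set (u # map (head Z) es)"
        by auto
      ultimately have "y \<in> set (u # map (head Z) es1)"
        using es(1) by auto
      then obtain es12 where "walk Z y es12 x"
        using walk_split_at_vertex[OF es(2)] by blast
      moreover from Cons.prems(3) \<open>y \<in> set xs\<close> have "reach Z x y"
        by simp
      then obtain es21 where "es21 \<noteq> []" "walk Z x es21 y"
        unfolding reach_def by blast
      ultimately have "walk Z x (es21 @ es12) x"
        by (simp add: walk_append_walk)
      with \<open>es21 \<noteq> []\<close> show False
        using walk_acyclic by blast
    qed
  qed
  moreover from Cons.prems(3) have "sorted_wrt (reach Z) (x # xs @ [v])"
    by simp
  ultimately obtain Qs where "concat Qs = es2" "segment_walks Z (x # xs @ [v]) Qs"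
    using Cons.IH[OF es(3)] by blast
  with es show ?case
    by (intro exI[of _ "es1 # Qs"]) (simp add: segment_walks_Cons)
qed

lemma uniform_read_segment_count:
  assumes "uniform_read Z d" "x \<in> Vars Z"
    and "segment_walks Z ws Ps" "segment_walks Z ws Rs"
    and "hd ws = src Z" "last ws = snk Z" "j < length Ps"
  shows "length (filter (labels_var Z x) (Rs ! j)) = length (filter (labels_var Z x) (Ps ! j))"
proof -
  define cnt where "cnt es = length (filter (labels_var Z x) es)" for es
  have cnt_concat: "cnt (concat Qs) = sum_list (map cnt Qs)" for Qs
    by (induction Qs) (simp_all add: cnt_def)
  have cnt_path: "cnt (concat Qs) = d" if "segment_walks Z ws Qs" for Qs
  proof -
    from src_in_verts that assms(5,6) have "ss_path Z (concat Qs)"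
      unfolding ss_path_def by (metis walk_concat_segments)
    with assms(1,2) show ?thesis
      by (simp add: uniform_read_def cnt_def)
  qed
  have "sum_list (map cnt (Ps[j := Rs ! j])) = sum_list (map cnt Ps) + cnt (Rs ! j) - cnt (Ps ! j)"
    using assms(7) by (simp add: map_update sum_list_update)
  moreover have "cnt (Ps ! j) \<le> sum_list (map cnt Ps)"
    using assms(7) elem_le_sum_list[of j "map cnt Ps"] by simp
  moreover have "sum_list (map cnt (Ps[j := Rs ! j])) = sum_list (map cnt Ps)"
    using cnt_path[OF segment_walks_update[OF assms(3,4)]] cnt_path[OF assms(3)]
    by (simp add: cnt_concat)
  ultimately show ?thesis
    unfolding cnt_def by linarith
qed

lemma separator_segments:
  assumes "separates Z X Y1 Y2"
  obtains ws Ps sel where "hd ws = src Z" "last ws = snk Z" "X \<subseteq> set ws" "segment_walks Z ws Ps"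
    and "\<And>Q. ss_path Z Q \<Longrightarrow> X \<subseteq> set (pverts Z Q) \<Longrightarrow> \<exists>Qs. concat Qs = Q \<and> segment_walks Z ws Qs"
    and "\<And>i e x. i < length Ps \<Longrightarrow> e \<in> set (Ps ! i) \<Longrightarrow> labels_var Z x e \<Longrightarrow>
      (x \<in> Y1 \<longrightarrow> sel i) \<and> (x \<in> Y2 \<longrightarrow> \<not> sel i)"
proof -
  from assms obtain P Ps where "ss_path Z P" "partition_gen Z P X Ps"
    and alt: "alternating Z Ps Y1 Y2 \<or> alternating Z Ps Y2 Y1"
    unfolding separates_def by blast
  obtain sel where sel: "\<And>i e x. i < length Ps \<Longrightarrow> e \<in> set (Ps ! i) \<Longrightarrow> labels_var Z x e \<Longrightarrow>
      (x \<in> Y1 \<longrightarrow> sel i) \<and> (x \<in> Y2 \<longrightarrow> \<not> sel i)"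
    using alternating_selector[OF alt] by blast
  define xs where "xs = map (\<lambda>p. head Z (last p)) (butlast Ps)"
  from \<open>partition_gen Z P X Ps\<close> have "concat Ps = P" "[] \<notin> set Ps" "Ps \<noteq> []" "set xs = X"
    unfolding partition_gen_def xs_def by auto
  with \<open>ss_path Z P\<close> have seg: "segment_walks Z (src Z # xs @ [snk Z]) Ps"
    unfolding ss_path_def xs_def using segment_walks_of_partition by blast
  moreover from seg \<open>[] \<notin> set Ps\<close> have "sorted_wrt (reach Z) (src Z # xs @ [snk Z])"
    by (rule segment_walks_sorted_reach)
  moreover have "\<exists>Qs. concat Qs = Q \<and> segment_walks Z (src Z # xs @ [snk Z]) Qs"
    if "ss_path Z Q" "X \<subseteq> set (pverts Z Q)" for Q
    using segment_walks_of_walk_through \<open>set xs = X\<close> that \<open>sorted_wrt (reach Z) (src Z # xs @ [snk Z])\<close>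
    unfolding ss_path_def pverts_def by blast
  ultimately show ?thesis
    using that[of "src Z # xs @ [snk Z]" Ps sel] sel \<open>set xs = X\<close> by auto
qed

lemma splice_along_separator:
  assumes "uniform_read Z d" "separates Z X Y1 Y2" "Y1 \<subseteq> Vars Z" "Y2 \<subseteq> Vars Z"
    and "ss_path Z Q'" "X \<subseteq> set (pverts Z Q')" "ss_path Z Q''" "X \<subseteq> set (pverts Z Q'')"
  obtains Q where "ss_path Z Q" "X \<subseteq> set (pverts Z Q)" "set Q \<subseteq> set Q' \<union> set Q''"
    and "\<forall>e\<in>set Q. \<forall>x\<in>Y1. labels_var Z x e \<longrightarrow> e \<in> set Q'"
    and "\<forall>e\<in>set Q. \<forall>x\<in>Y2. labels_var Z x e \<longrightarrow> e \<in> set Q''"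
proof -
  obtain ws Ps sel where ws: "hd ws = src Z" "last ws = snk Z" "X \<subseteq> set ws" "segment_walks Z ws Ps"
    and through: "\<And>Q. ss_path Z Q \<Longrightarrow> X \<subseteq> set (pverts Z Q) \<Longrightarrow> \<exists>Qs. concat Qs = Q \<and> segment_walks Z ws Qs"
    and sel: "\<And>i e x. i < length Ps \<Longrightarrow> e \<in> set (Ps ! i) \<Longrightarrow> labels_var Z x e \<Longrightarrow>
      (x \<in> Y1 \<longrightarrow> sel i) \<and> (x \<in> Y2 \<longrightarrow> \<not> sel i)"
    using separator_segments[OF assms(2)] by blast
  obtain Q1s Q2s where Q1s: "concat Q1s = Q'" "segment_walks Z ws Q1s"
    and Q2s: "concat Q2s = Q''" "segment_walks Z ws Q2s"
    using through assms(5-8) by meson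
  have len: "length Q1s = length Ps" "length Q2s = length Ps"
    using ws(4) Q1s(2) Q2s(2) by (simp_all add: segment_walks_def)
  have unlabelled: "\<not> labels_var Z x e"
    if "segment_walks Z ws Rs" "i < length Ps" "x \<in> Y1 \<union> Y2" "e \<in> set (Rs ! i)"
      and "\<forall>e\<in>set (Ps ! i). \<not> labels_var Z x e" for Rs i x e
  proof -
    from that(3) assms(3,4) have "x \<in> Vars Z"
      by blast
    with that show ?thesis
      using uniform_read_segment_count[OF assms(1) _ ws(4) that(1) ws(1,2) that(2)]
      by (metis filter_empty_conv length_0_conv)
  qed
  define Cs where "Cs = map (\<lambda>i. if sel i then Q1s ! i else Q2s ! i) [0..<length Ps]"
  have seg: "segment_walks Z ws Cs"
    using segment_walks_choose[OF Q1s(2) Q2s(2)] len by (simp add: Cs_def)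
  have segment_of: "\<exists>i<length Ps. (sel i \<and> e \<in> set (Q1s ! i)) \<or> (\<not> sel i \<and> e \<in> set (Q2s ! i))"
    if "e \<in> set (concat Cs)" for e
    using that by (auto simp: Cs_def split: if_splits)
  show ?thesis
  proof (rule that[of "concat Cs"])
    show "ss_path Z (concat Cs)"
      using walk_concat_segments[OF seg] ws(1,2) src_in_verts by (simp add: ss_path_def)
    show "X \<subseteq> set (pverts Z (concat Cs))"
      using segment_walks_vertices[OF seg] ws(1,3) by (auto simp: pverts_def)
    show "set (concat Cs) \<subseteq> set Q' \<union> set Q''"
      using segment_of Q1s(1) Q2s(1) len by (fastforce simp: set_concat)
    show "\<forall>e\<in>set (concat Cs). \<forall>x\<in>Y1. labels_var Z x e \<longrightarrow> e \<in> set Q'"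
      using segment_of unlabelled[OF Q2s(2)] sel Q1s(1) len by (fastforce simp: set_concat)
    show "\<forall>e\<in>set (concat Cs). \<forall>x\<in>Y2. labels_var Z x e \<longrightarrow> e \<in> set Q''"
      using segment_of unlabelled[OF Q1s(2)] sel Q2s(1) len by (fastforce simp: set_concat)
  qed
qed

end

theorem lemma6:
  fixes Z :: "('v, 'e, 'x) nbp" and d :: nat
    and X :: "'v set" and Y1 Y2 Y1' Y2' :: "'x set" and S :: "'x lit set"
    and Q' Q'' :: "'e list"
  assumes "is_nbp Z" and "uniform_read Z d"
    and "Y1 \<subseteq> Vars Z" and "Y2 \<subseteq> Vars Z" and "Y1 \<inter> Y2 = {}"
    and "separates Z X Y1 Y2"
    and "Y1' \<subseteq> Y1" and "Y2' \<subseteq> Y2"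
    and "assignment S (Vars Z - (Y1 \<union> Y2))"
    and "ss_path Z Q'" and "computational Z Q'" and "X \<subseteq> set (pverts Z Q')"
    and "ss_path Z Q''" and "computational Z Q''" and "X \<subseteq> set (pverts Z Q'')"
    and "S \<subseteq> A Z Q' \<inter> A Z Q''"
    and "\<forall>x\<in>Y1'. Neg x \<in> A Z Q'"
    and "\<forall>x\<in>Y2'. Neg x \<in> A Z Q''"
  shows "\<exists>Q. ss_path Z Q \<and> computational Z Q \<and> X \<subseteq> set (pverts Z Q)
           \<and> S \<subseteq> A Z Q \<and> (\<forall>x\<in>Y1' \<union> Y2'. Neg x \<in> A Z Q)"
proof -
  obtain Q where Q: "ss_path Z Q" "X \<subseteq> set (pverts Z Q)" "set Q \<subseteq> set Q' \<union> set Q''"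
    and Y1_edges: "\<forall>e\<in>set Q. \<forall>x\<in>Y1. labels_var Z x e \<longrightarrow> e \<in> set Q'"
    and Y2_edges: "\<forall>e\<in>set Q. \<forall>x\<in>Y2. labels_var Z x e \<longrightarrow> e \<in> set Q''"
    using splice_along_separator[OF assms(1,2,6,3,4,10,12,13,15)] by blast
  have "set Q \<subseteq> edges Z"
    using Q(1) by (simp add: ss_path_def walk_edges)
  moreover have "var ` A Z Q' \<union> var ` A Z Q'' \<subseteq> var ` A Z Q"
    using uniform_read_var_image_A[OF assms(2)] assms(10,13) Q(1) by blast
  ultimately have "A Z Q = {l \<in> A Z Q'. var l \<in> Y1} \<union> {l \<in> A Z Q''. var l \<in> Y2} \<union> S"
    and "computational Z Q"
    using A_of_splice[OF assms(11,14,5,9,16) _ Q(3) Y1_edges Y2_edges] by blast+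
  with Q(1,2) assms(7,8,17,18) show ?thesis
    by (intro exI[of _ Q]) auto
qed

end
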